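(* Let $n\geq 1$. Consider the arrangement of the lines $\mathcal{L}_0,\dots,\mathcal{L}_{n-1}$. Then: (i) exactly $n$ of its regions lie in $\mathcal{H}_{n-1}^-$, and their codes are the words $1^k0^{n-k}$, $k=0,1,\dots,n-1$; (ii) the codes of the regions lying in $\mathcal{H}_{n-1}^+$ are exactly the words $\pi 1$ where $\pi$ ranges over $\mathcal{P}_{n-1}$ (each region of the arrangement of $\mathcal{L}_0,\dots,\mathcal{L}_{n-2}$ giving exactly one such region).
   Context: For an integer $m\geq 0$, $\mathcal{L}_m$ is the line $y=mx-m^2$, $H_m(x,y)=y-mx+m^2$, $\mathcal{H}_m^+=\{H_m>0\}$ (the side containing $(-1,1)$) and $\mathcal{H}_m^-=\{H_m<0\}$. For $n\geq 0$, the regions of the arrangement of $\mathcal{L}_0,\dots,\mathcal{L}_{n-1}$ are the connected components of $\mathbb{R}^2\setminus(\mathcal{L}_0\cup\dots\cup\mathcal{L}_{n-1})$ (for $n=0$, the whole plane). Each region lies, for each $i$, entirely in $\mathcal{H}_i^+$ or entirely in $\mathcal{H}_i^-$; its code is the binary word $\sigma_0\sigma_1\cdots\sigma_{n-1}$ with $\sigma_i=1$ if the region lies in $\mathcal{H}_i^+$ and $\sigma_i=0$ if it lies in $\mathcal{H}_i^-$. $\mathcal{P}_n$ is the set of codes of the regions of this arrangement; $\mathcal{P}_0=\{\varepsilon\}$ with $\varepsilon$ the empty word. Words are concatenated; $\sigma^k$ denotes $k$ consecutive copies of the letter $\sigma$, with $\sigma^k=\varepsilon$ for $k\leq 0$.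 *)

theory Defs
  imports "HOL-Analysis.Analysis"
begin

definition H :: "nat \<Rightarrow> real \<times> real \<Rightarrow> real" where
  "H m p = snd p - real m * fst p + (real m)\<^sup>2"

definition Hplus :: "nat \<Rightarrow> (real \<times> real) set" where
  "Hplus m = {p. H m p > 0}"

definition Hminus :: "nat \<Rightarrow> (real \<times> real) set" where
  "Hminus m = {p. H m p < 0}"

definition line :: "nat \<Rightarrow> (real \<times> real) set" where
  "line m = {p. H m p = 0}"

definition complement :: "nat \<Rightarrow> (real \<times> real) set" where
  "complement n = UNIV - (\<Union>i<n. line i)"

definition regions :: "nat \<Rightarrow> (real \<times> real) set set" where
  "regions n = {connected_component_set (complement n) p | p. p \<in> complement n}"

definition point_code :: "nat \<Rightarrow> real \<times> real \<Rightarrow> nat list" where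
  "point_code n p = map (\<lambda>i. if H i p > 0 then 1 else 0) [0..<n]"

text \<open>Code of a region: code of any of its points (well defined, as a region
  lies entirely on one side of each line).\<close>
definition region_code :: "nat \<Rightarrow> (real \<times> real) set \<Rightarrow> nat list" where
  "region_code n R = point_code n (SOME p. p \<in> R)"

definition P :: "nat \<Rightarrow> nat list set" where
  "P n = region_code n ` regions n"

end

theory Submission
  imports Defs
begin

text \<open>The lines L_m are tangents of the parabola y = x^2/4, and for a fixed point the
  value H_m at that point is a monic quadratic in m. Hence the indices of the lines lying
  above a point form an interval, and every interval [k, l) of indices is realised by the
  intersection of the tangents with half-integral parameters k - 1/2 and l - 1/2.
  Regions are exactly the nonempty sign cells: a cell is an intersection of half-planes,
  hence convex, and no H_i can change sign on a connected component. A code ending in 0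
  therefore has its interval of zeros ending at n - 1, i.e. it is 1^k 0^(n-k); and every
  sign pattern of the first n - 1 lines can be realised on the positive side of L_(n-1),
  by moving the interval of zeros of its point, if necessary, to end just before n - 1.\<close>

lemma H_eq_inner: "H m p = inner (- real m, 1::real) p + (real m)\<^sup>2"
  by (cases p) (simp add: H_def inner_Pair)

lemma convex_Hplus: "convex (Hplus m)"
proof -
  have "Hplus m = {p. inner (- real m, 1::real) p > - (real m)\<^sup>2}"
    by (auto simp: Hplus_def H_eq_inner)
  then show ?thesis by (simp add: convex_halfspace_gt)
qed

lemma convex_Hminus: "convex (Hminus m)"
proof -
  have "Hminus m = {p. inner (- real m, 1::real) p < - (real m)\<^sup>2}"
    by (auto simp: Hminus_def H_eq_inner)
  then show ?thesis by (simp add: convex_halfspace_lt)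
qed

lemma continuous_on_H: "continuous_on S (H m)"
  unfolding H_def by (intro continuous_intros)

lemma mem_complement_iff: "q \<in> complement n \<longleftrightarrow> (\<forall>i<n. H i q \<noteq> 0)"
  by (auto simp: complement_def line_def)

lemma point_code_eq_iff:
  "point_code n q = point_code n p \<longleftrightarrow> (\<forall>i<n. H i q > 0 \<longleftrightarrow> H i p > 0)"
  by (auto simp: point_code_def map_eq_conv split: if_splits)

lemma point_code_Suc: "point_code (Suc m) q = point_code m q @ [if H m q > 0 then 1 else 0]"
  by (simp add: point_code_def)

definition cell :: "nat \<Rightarrow> nat list \<Rightarrow> (real \<times> real) set" where
  "cell n c = {q \<in> complement n. point_code n q = c}"

lemma mem_cell_iff:
  "q \<in> cell n (point_code n p) \<longleftrightarrow> q \<in> complement n \<and> (\<forall>i<n. H i q > 0 \<longleftrightarrow> H i p > 0)"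
  by (simp add: cell_def point_code_eq_iff)

lemma cell_eq_INT_halfplanes:
  assumes "p \<in> complement n"
  shows "cell n (point_code n p) = (\<Inter>i<n. if H i p > 0 then Hplus i else Hminus i)"
proof (intro set_eqI)
  fix q
  have side: "(H i q > 0 \<longleftrightarrow> H i p > 0) \<and> H i q \<noteq> 0
      \<longleftrightarrow> q \<in> (if H i p > 0 then Hplus i else Hminus i)" if "i < n" for i
    using assms that by (auto simp: mem_complement_iff Hplus_def Hminus_def)
  have "q \<in> cell n (point_code n p) \<longleftrightarrow> (\<forall>i<n. (H i q > 0 \<longleftrightarrow> H i p > 0) \<and> H i q \<noteq> 0)"
    by (auto simp: mem_cell_iff mem_complement_iff)
  also have "\<dots> \<longleftrightarrow> q \<in> (\<Inter>i<n. if H i p > 0 then Hplus i else Hminus i)"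
    unfolding INT_iff lessThan_iff using side by blast
  finally show "q \<in> cell n (point_code n p) \<longleftrightarrow> q \<in> (\<Inter>i<n. if H i p > 0 then Hplus i else Hminus i)" .
qed

lemma connected_component_eq_cell:
  assumes p: "p \<in> complement n"
  shows "connected_component_set (complement n) p = cell n (point_code n p)"
proof
  have "convex (cell n (point_code n p))"
    unfolding cell_eq_INT_halfplanes[OF p] by (intro convex_INT) (simp add: convex_Hplus convex_Hminus)
  then show "cell n (point_code n p) \<subseteq> connected_component_set (complement n) p"
    using p by (intro connected_component_maximal convex_connected) (auto simp: cell_def)
next
  let ?K = "connected_component_set (complement n) p"
  have K: "?K \<subseteq> complement n" "p \<in> ?K"
    using p by (auto simp: connected_component_subset)
  have "H i q > 0 \<longleftrightarrow> H i p > 0" if q: "q \<in> ?K" and i: "i < n" for q i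
  proof -
    have "connected (H i ` ?K)"
      by (intro connected_continuous_image continuous_on_H) simp
    moreover have "0 \<notin> H i ` ?K" "H i q \<in> H i ` ?K" "H i p \<in> H i ` ?K"
      using K q i by (auto simp: mem_complement_iff)
    ultimately have "\<not> (H i q < 0 \<and> 0 < H i p)" "\<not> (H i p < 0 \<and> 0 < H i q)"
      unfolding connected_iff_interval by (meson less_imp_le)+
    moreover have "H i q \<noteq> 0" "H i p \<noteq> 0"
      using K q i by (auto simp: mem_complement_iff)
    ultimately show ?thesis
      by linarith
  qed
  then show "?K \<subseteq> cell n (point_code n p)"
    using K by (auto simp: mem_cell_iff)
qed

lemma regions_eq_cells: "regions n = cell n ` point_code n ` complement n"
proof -
  have "regions n = (\<lambda>p. connected_component_set (complement n) p) ` complement n"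
    by (auto simp: regions_def)
  also have "\<dots> = cell n ` point_code n ` complement n"
    by (simp add: connected_component_eq_cell image_image cong: image_cong)
  finally show ?thesis .
qed

lemma region_code_cell:
  assumes "c \<in> point_code n ` complement n"
  shows "region_code n (cell n c) = c"
proof -
  have "cell n c \<noteq> {}"
    using assms by (auto simp: cell_def)
  then have "(SOME p. p \<in> cell n c) \<in> cell n c"
    by (simp add: some_in_eq)
  then show ?thesis
    by (simp add: region_code_def cell_def)
qed

lemma region_code_image_cells:
  assumes "C \<subseteq> point_code n ` complement n"
  shows "region_code n ` cell n ` C = C"
proof -
  have "region_code n ` cell n ` C = (\<lambda>c. region_code n (cell n c)) ` C"
    by (simp add: image_image)
  also have "\<dots> = C"
    using assms by (simp add: region_code_cell subset_eq cong: image_cong)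
  finally show ?thesis .
qed

lemma inj_on_region_code: "inj_on (region_code n) (regions n)"
proof (rule inj_onI)
  fix R R' assume "R \<in> regions n" "R' \<in> regions n" and eq: "region_code n R = region_code n R'"
  then obtain c c' where "c \<in> point_code n ` complement n" "c' \<in> point_code n ` complement n"
    and "R = cell n c" "R' = cell n c'"
    unfolding regions_eq_cells by blast
  then show "R = R'"
    using eq by (simp add: region_code_cell)
qed

lemma P_eq_point_codes: "P n = point_code n ` complement n"
  unfolding P_def regions_eq_cells by (simp add: region_code_image_cells)

lemma region_codes_in_side:
  assumes "i < n" and A: "A = Hplus i \<or> A = Hminus i"
  shows "region_code n ` {R \<in> regions n. R \<subseteq> A} = point_code n ` (complement n \<inter> A)"
proof -
  have side: "cell n (point_code n p) \<subseteq> A \<longleftrightarrow> p \<in> A" if p: "p \<in> complement n" for p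
  proof -
    have "q \<in> A \<longleftrightarrow> p \<in> A" if "q \<in> cell n (point_code n p)" for q
    proof -
      have "H i q \<noteq> 0" "H i p \<noteq> 0" "H i q > 0 \<longleftrightarrow> H i p > 0"
        using that p \<open>i < n\<close> by (auto simp: mem_cell_iff mem_complement_iff)
      then show ?thesis
        using A by (auto simp: Hplus_def Hminus_def)
    qed
    moreover have "p \<in> cell n (point_code n p)"
      using p by (simp add: mem_cell_iff)
    ultimately show ?thesis
      by blast
  qed
  have "{R \<in> regions n. R \<subseteq> A} = cell n ` point_code n ` (complement n \<inter> A)"
    unfolding regions_eq_cells using side by blast
  then show ?thesis
    by (simp add: region_code_image_cells image_mono)
qed

lemma H_product_point: "H i (a + b, a * b) = (real i - a) * (real i - b)"
  by (simp add: H_def power2_eq_square algebra_simps)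

lemma exists_point_negative_exactly_on:
  assumes "k \<le> l"
  obtains q where "\<And>i. H i q \<noteq> 0" "\<And>i. H i q < 0 \<longleftrightarrow> k \<le> i \<and> i < l"
proof
  \<comment> \<open>H_a vanishes at (a + b, a b): this is where the tangents with parameters a and b meet.\<close>
  define a b where "a = real k - 1/2" and "b = real l - 1/2"
  have not_half_integer: "real i \<noteq> real j - 1/2" for i j
  proof
    assume "real i = real j - 1/2"
    then have "real (2 * i + 1) = real (2 * j)"
      by simp
    then have "2 * i + 1 = 2 * j"
      by (simp only: of_nat_eq_iff)
    then show False
      by presburger
  qed
  then have "real i \<noteq> a" "real i \<noteq> b" for i
    unfolding a_def b_def by simp_all
  then show "H i (a + b, a * b) \<noteq> 0" for i
    by (simp add: H_product_point)
  have "a < real i \<longleftrightarrow> k \<le> i" "real i < b \<longleftrightarrow> i < l" for i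
  proof -
    have "real k < real i + 1 \<longleftrightarrow> k \<le> i" "real i + 1 \<le> real l \<longleftrightarrow> i < l"
      by linarith+
    then show "a < real i \<longleftrightarrow> k \<le> i" "real i < b \<longleftrightarrow> i < l"
      unfolding a_def b_def using not_half_integer[of i k] not_half_integer[of i l] by linarith+
  qed
  moreover have "(real i - a) * (real i - b) < 0 \<longleftrightarrow> a < real i \<and> real i < b" for i
    using assms by (auto simp: mult_less_0_iff a_def b_def)
  ultimately show "H i (a + b, a * b) < 0 \<longleftrightarrow> k \<le> i \<and> i < l" for i
    by (simp only: H_product_point)
qed

lemma H_neg_between:
  assumes "a < b" "b < c" "H a p \<le> 0" "H c p \<le> 0"
  shows "H b p < 0"
proof -
  \<comment> \<open>i \<mapsto> H i p is a monic quadratic in i, hence strictly convex.\<close>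
  have "(real c - real a) * H b p = (real c - real b) * H a p + (real b - real a) * H c p
      - (real b - real a) * (real c - real b) * (real c - real a)"
    by (simp add: H_def power2_eq_square algebra_simps)
  moreover have "(real c - real b) * H a p \<le> 0" "(real b - real a) * H c p \<le> 0"
    using assms by (simp_all add: mult_nonneg_nonpos)
  moreover have "(real b - real a) * (real c - real b) * (real c - real a) > 0"
    using assms by simp
  ultimately have "(real c - real a) * H b p < 0"
    by linarith
  then show ?thesis
    using assms by (simp add: mult_less_0_iff)
qed

lemma negative_indices_final_segment:
  assumes p: "p \<in> complement j" and "H j p \<le> 0"
  obtains k where "k \<le> j" "\<And>i. i < j \<Longrightarrow> H i p < 0 \<longleftrightarrow> k \<le> i"
proof
  define k where "k = (LEAST i. i = j \<or> H i p < 0)"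
  show "k \<le> j"
    unfolding k_def by (simp add: Least_le)
  have k: "k = j \<or> H k p < 0"
    unfolding k_def by (rule LeastI[of _ j]) simp
  fix i assume "i < j"
  show "H i p < 0 \<longleftrightarrow> k \<le> i"
  proof
    assume "H i p < 0"
    then show "k \<le> i"
      unfolding k_def by (simp add: Least_le)
  next
    assume "k \<le> i"
    then show "H i p < 0"
      using k \<open>i < j\<close> \<open>H j p \<le> 0\<close> H_neg_between[of k i j p] by (cases "k = i") auto
  qed
qed

lemma point_code_threshold:
  assumes "k \<le> n" "\<And>i. i < n \<Longrightarrow> H i q > 0 \<longleftrightarrow> i < k"
  shows "point_code n q = replicate k 1 @ replicate (n - k) 0"
  using assms by (intro nth_equalityI) (auto simp: point_code_def nth_append)

lemma point_codes_in_Hminus: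
  "point_code (Suc m) ` (complement (Suc m) \<inter> Hminus m)
     = {replicate k 1 @ replicate (Suc m - k) 0 | k. k < Suc m}"
proof (intro set_eqI iffI)
  fix c :: "nat list" assume "c \<in> point_code (Suc m) ` (complement (Suc m) \<inter> Hminus m)"
  then obtain q where q: "q \<in> complement (Suc m)" "H m q < 0" and c: "c = point_code (Suc m) q"
    by (auto simp: Hminus_def)
  then have "q \<in> complement m"
    by (simp add: mem_complement_iff)
  obtain k where "k \<le> m" and k: "\<And>i. i < m \<Longrightarrow> H i q < 0 \<longleftrightarrow> k \<le> i"
    using negative_indices_final_segment[OF \<open>q \<in> complement m\<close> less_imp_le[OF q(2)]] by blast
  have "H i q > 0 \<longleftrightarrow> i < k" if "i < Suc m" for i
    using that q k[of i] \<open>k \<le> m\<close> by (cases "i = m") (auto simp: mem_complement_iff)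
  then have "c = replicate k 1 @ replicate (Suc m - k) 0"
    unfolding c using \<open>k \<le> m\<close> by (intro point_code_threshold) auto
  then show "c \<in> {replicate k 1 @ replicate (Suc m - k) 0 | k. k < Suc m}"
    using \<open>k \<le> m\<close> by auto
next
  fix c :: "nat list" assume "c \<in> {replicate k 1 @ replicate (Suc m - k) 0 | k. k < Suc m}"
  then obtain k where "k < Suc m" and c: "c = replicate k 1 @ replicate (Suc m - k) 0"
    by blast
  obtain q where nz: "\<And>i. H i q \<noteq> 0" and neg: "\<And>i. H i q < 0 \<longleftrightarrow> k \<le> i \<and> i < Suc m"
    using exists_point_negative_exactly_on[of k "Suc m"] \<open>k < Suc m\<close> by auto
  have "H i q > 0 \<longleftrightarrow> i < k" if "i < Suc m" for i
    using that nz[of i] neg[of i] by auto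
  then have "point_code (Suc m) q = c"
    unfolding c using \<open>k < Suc m\<close> by (intro point_code_threshold) auto
  moreover have "q \<in> complement (Suc m) \<inter> Hminus m"
    using nz neg[of m] \<open>k < Suc m\<close> by (auto simp: mem_complement_iff Hminus_def)
  ultimately show "c \<in> point_code (Suc m) ` (complement (Suc m) \<inter> Hminus m)"
    by blast
qed

lemma point_codes_in_Hplus:
  "point_code (Suc m) ` (complement (Suc m) \<inter> Hplus m)
     = (\<lambda>\<pi>. \<pi> @ [1]) ` point_code m ` complement m"
proof (intro set_eqI iffI)
  fix c :: "nat list" assume "c \<in> point_code (Suc m) ` (complement (Suc m) \<inter> Hplus m)"
  then show "c \<in> (\<lambda>\<pi>. \<pi> @ [1]) ` point_code m ` complement m"
    by (auto simp: Hplus_def point_code_Suc mem_complement_iff)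
next
  fix c :: "nat list" assume "c \<in> (\<lambda>\<pi>. \<pi> @ [1]) ` point_code m ` complement m"
  then obtain p where p: "p \<in> complement m" and c: "c = point_code m p @ [1]"
    by blast
  obtain q where q: "q \<in> complement (Suc m)" "H m q > 0" "point_code m q = point_code m p"
  proof (cases "H m p > 0")
    case True
    with p have "p \<in> complement (Suc m)"
      by (auto simp: mem_complement_iff less_Suc_eq)
    then show ?thesis
      by (rule that[OF _ True refl])
  next
    case False
    then have "H m p \<le> 0"
      by simp
    obtain k where "k \<le> m" and k: "\<And>i. i < m \<Longrightarrow> H i p < 0 \<longleftrightarrow> k \<le> i"
      using negative_indices_final_segment[OF p \<open>H m p \<le> 0\<close>] by blast
    obtain q where nz: "\<And>i. H i q \<noteq> 0" and neg: "\<And>i. H i q < 0 \<longleftrightarrow> k \<le> i \<and> i < m"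
      using exists_point_negative_exactly_on[OF \<open>k \<le> m\<close>] by auto
    have "H i q > 0 \<longleftrightarrow> H i p > 0" if "i < m" for i
      using that p nz[of i] neg[of i] k[of i] by (auto simp: mem_complement_iff)
    moreover have "H m q > 0"
      using nz[of m] neg[of m] by auto
    ultimately have "q \<in> complement (Suc m)" "H m q > 0" "point_code m q = point_code m p"
      using nz by (simp_all add: mem_complement_iff point_code_eq_iff)
    then show ?thesis
      by (rule that)
  qed
  then have "c = point_code (Suc m) q"
    by (simp add: c point_code_Suc)
  then show "c \<in> point_code (Suc m) ` (complement (Suc m) \<inter> Hplus m)"
    using q by (auto simp: Hplus_def)
qed

lemma card_threshold_words:
  "card {replicate k (1::nat) @ replicate (n - k) 0 | k. k < n} = n"
proof -
  have "{replicate k (1::nat) @ replicate (n - k) 0 | k. k < n}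
      = (\<lambda>k. replicate k 1 @ replicate (n - k) 0) ` {..<n}"
    by auto
  moreover have sum: "sum_list (replicate k (1::nat) @ replicate (n - k) 0) = k" for k
    by (simp add: sum_list_replicate)
  have "inj_on (\<lambda>k. replicate k (1::nat) @ replicate (n - k) 0) {..<n}"
    by (rule inj_onI) (metis sum)
  ultimately show ?thesis
    by (simp add: card_image)
qed

theorem proposition17:
  fixes n :: nat
  assumes "n \<ge> 1"
  shows "card {R \<in> regions n. R \<subseteq> Hminus (n - 1)} = n
       \<and> region_code n ` {R \<in> regions n. R \<subseteq> Hminus (n - 1)}
           = {replicate k 1 @ replicate (n - k) 0 | k. k < n}
       \<and> region_code n ` {R \<in> regions n. R \<subseteq> Hplus (n - 1)}
           = {\<pi> @ [1] | \<pi>. \<pi> \<in> P (n - 1)}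
       \<and> inj_on (region_code n) {R \<in> regions n. R \<subseteq> Hplus (n - 1)}
       \<and> card {R \<in> regions n. R \<subseteq> Hplus (n - 1)} = card (regions (n - 1))"
proof -
  obtain m where n: "n = Suc m" and "n - 1 = m"
    using assms by (cases n) auto
  let ?below = "{R \<in> regions n. R \<subseteq> Hminus m}"
  let ?above = "{R \<in> regions n. R \<subseteq> Hplus m}"
  have inj: "inj_on (region_code n) ?below" "inj_on (region_code n) ?above"
    by (auto intro: inj_on_subset[OF inj_on_region_code])
  have "region_code n ` ?below = point_code n ` (complement n \<inter> Hminus m)"
    by (rule region_codes_in_side[of m]) (simp_all add: n)
  also have "\<dots> = {replicate k 1 @ replicate (n - k) 0 | k. k < n}"
    unfolding n by (rule point_codes_in_Hminus)
  finally have below: "region_code n ` ?below = {replicate k 1 @ replicate (n - k) 0 | k. k < n}" .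
  have "region_code n ` ?above = point_code n ` (complement n \<inter> Hplus m)"
    by (rule region_codes_in_side[of m]) (simp_all add: n)
  also have "\<dots> = (\<lambda>\<pi>. \<pi> @ [1]) ` P m"
    unfolding n P_eq_point_codes by (rule point_codes_in_Hplus)
  finally have "region_code n ` ?above = (\<lambda>\<pi>. \<pi> @ [1]) ` P m" .
  then have above: "region_code n ` ?above = {\<pi> @ [1] | \<pi>. \<pi> \<in> P m}"
    by blast
  have card_below: "card ?below = n"
    using card_image[OF inj(1)] below card_threshold_words[of n] by simp
  have "inj_on (\<lambda>\<pi>. \<pi> @ [1::nat]) (P m)"
    by (simp add: inj_on_def)
  then have "card ?above = card (P m)"
    using card_image[OF inj(2)] card_image[of "\<lambda>\<pi>. \<pi> @ [1::nat]" "P m"] \<open>region_code n ` ?above = _ ` P m\<close>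
    by simp
  also have "\<dots> = card (regions m)"
    unfolding P_def by (rule card_image[OF inj_on_region_code])
  finally have card_above: "card ?above = card (regions m)" .
  show ?thesis
    unfolding \<open>n - 1 = m\<close> by (intro conjI card_below below above inj(2) card_above)
qed

end
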